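(* Let $D,n,m,r\ge1$. For $0\le i<D$ let $M_i\in\mathbb{F}[x]^{r\times r}$ and $N_i\in\mathbb{F}[y]^{r\times r}$ have entries of degree $<n$, and let $f_i\in\mathbb{F}[x]$, $g_i\in\mathbb{F}[y]$ have degree $\le m$. Let $\omega\in\mathbb{F}$ have multiplicative order $\ge (Dnm)^2$. Let $\beta_0,\dots,\beta_{r^2-1}\in\mathbb{F}$ be distinct and let $p_0,\dots,p_{r^2-1}$ be the corresponding Lagrange interpolation polynomials. Then for all but fewer than $(Dnmr)^2$ values of $\alpha\in\mathbb{F}$, $$\mathrm{span}\Big\{\prod_{i=0}^{D-1}M_i(f_i(x))\cdot\prod_{i=0}^{D-1}N_i(g_i(y))\Big\}_{x,y\in\mathbb{F}}\subseteq\mathrm{span}\Big\{\prod_{i=0}^{D-1}M_i\Big(\sum_{\ell=0}^{r^2-1}f_i(\omega^\ell\alpha)p_\ell(z)\Big)\cdot\prod_{i=0}^{D-1}N_i\Big(\sum_{\ell=0}^{r^2-1}g_i((\omega^\ell\alpha)^{Dnm})p_\ell(z)\Big)\Big\}_{z\in\mathbb{F}}.$$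
   Context: Products $\prod_{i=0}^{D-1}$ of matrices are taken in increasing order of $i$ from left to right. Given $s$ and distinct $\beta_0,\dots,\beta_{s-1}\in\mathbb{F}$, the Lagrange interpolation polynomials are the unique $p_\ell\in\mathbb{F}[t]$ of degree $<s$ with $p_\ell(\beta_i)=1$ if $i=\ell$ and $0$ otherwise, for $i,\ell\in\{0,\dots,s-1\}$. Spans are $\mathbb{F}$-linear spans in $\mathbb{F}^{r\times r}$. *)

theory Defs
  imports "Jordan_Normal_Form.Matrix" "HOL-Computational_Algebra.Polynomial"
begin

definition eval_mat :: "'a::comm_semiring_1 poly mat \<Rightarrow> 'a \<Rightarrow> 'a mat" where
  "eval_mat P t = map_mat (\<lambda>q. poly q t) P"

definition prod_mats :: "nat \<Rightarrow> nat \<Rightarrow> (nat \<Rightarrow> 'a::semiring_1 mat) \<Rightarrow> 'a mat" where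
  "prod_mats r D A = foldl (\<lambda>acc i. acc * A i) (1\<^sub>m r) [0..<D]"

definition mat_span :: "nat \<Rightarrow> 'a::field mat set \<Rightarrow> 'a mat set" where
  "mat_span r X = {A. \<exists>k c B. (\<forall>j<k. B j \<in> X) \<and>
      A = foldr (\<lambda>j acc. c j \<cdot>\<^sub>m B j + acc) [0..<k] (0\<^sub>m r r)}"

end

theory Submission
  imports Defs "Jordan_Normal_Form.Determinant"
begin

(* Write P(x) = prod_i M_i(f_i(x)) and Q(y) = prod_i N_i(g_i(y)).  Both are polynomial matrices
   whose entries have degree < K = Dnm, so P(x) Q(y) = sum_{s,t<K} x^s y^t C_(s+Kt) for constant
   matrices C_e, e < K^2 (separation of variables), and on the curve y = x^K this becomes the
   univariate combination sum_e u^e C_e.  Interpolation at z = beta_l turns the right-hand side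
   into the products at u = omega^l alpha, l < r^2.  It therefore suffices to show that, outside
   the roots of a nonzero polynomial of degree < r^2 K^2, the r^2 combinations
   Q_l = sum_e (omega^l alpha)^e C_e span every C_e.  For this pick the pivot basis C_s (s in S,
   |S| = d <= r^2) of span{C_e}; every C_e is a triangular combination of pivots.  The coordinate
   matrix G(alpha) of Q_0, ..., Q_(d-1) in this basis is polynomial in alpha, and the coefficient
   of det G in degree sum S is a Vandermonde determinant in the distinct points omega^s, hence
   nonzero.  Whenever det G(alpha) is nonzero, Cramer's rule expresses the pivots, and so all
   C_e, through the Q_l. *)

definition mat_comb :: "nat \<Rightarrow> (nat \<Rightarrow> 'a::comm_ring_1) \<Rightarrow> (nat \<Rightarrow> 'a mat) \<Rightarrow> nat set \<Rightarrow> 'a mat" where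
  "mat_comb r c B I = mat r r (\<lambda>ij. \<Sum>i\<in>I. c i * B i $$ ij)"

lemma mat_comb_carrier [simp]: "mat_comb r c B I \<in> carrier_mat r r"
  and mat_comb_dims [simp]: "dim_row (mat_comb r c B I) = r" "dim_col (mat_comb r c B I) = r"
  and mat_comb_index [simp]: "i < r \<Longrightarrow> j < r \<Longrightarrow> mat_comb r c B I $$ (i,j) = (\<Sum>k\<in>I. c k * B k $$ (i,j))"
  unfolding mat_comb_def by simp_all

lemma mat_comb_cong: "(\<And>i. i \<in> I \<Longrightarrow> c i = c' i) \<Longrightarrow> mat_comb r c B I = mat_comb r c' B I"
  unfolding mat_comb_def by (intro arg_cong[where f = "mat r r"] ext sum.cong) auto

lemma foldr_eq_mat_comb:
  assumes "\<And>j. j < k \<Longrightarrow> B j \<in> carrier_mat r r" and "Z \<in> carrier_mat r r"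
  shows "foldr (\<lambda>j acc. c j \<cdot>\<^sub>m B j + acc) [0..<k] Z = mat_comb r c B {..<k} + Z"
  using assms
proof (induction k arbitrary: Z)
  case 0
  then show ?case by (auto intro!: eq_matI)
next
  case (Suc k)
  have "foldr (\<lambda>j acc. c j \<cdot>\<^sub>m B j + acc) [0..<Suc k] Z
      = mat_comb r c B {..<k} + (c k \<cdot>\<^sub>m B k + Z)"
    using Suc by simp
  also have "\<dots> = mat_comb r c B {..<Suc k} + Z"
    using Suc.prems(1)[of k] Suc.prems(2) by (auto intro!: eq_matI simp: algebra_simps)
  finally show ?case .
qed

lemma mat_span_iff_comb:
  assumes X: "X \<subseteq> carrier_mat r r"
  shows "A \<in> mat_span r X \<longleftrightarrow> (\<exists>k c B. (\<forall>j<k. B j \<in> X) \<and> A = mat_comb r c B {..<k})"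
proof -
  have eq: "foldr (\<lambda>j acc. c j \<cdot>\<^sub>m B j + acc) [0..<k] (0\<^sub>m r r) = mat_comb r c B {..<k}"
    if "\<forall>j<k. B j \<in> X" for k c B
  proof -
    have "\<And>j. j < k \<Longrightarrow> B j \<in> carrier_mat r r" using that X by blast
    from foldr_eq_mat_comb[of k B r "0\<^sub>m r r" c, OF this] show ?thesis by simp
  qed
  show ?thesis
    unfolding mat_span_def mem_Collect_eq
  proof (intro iffI; elim exE conjE)
    fix k c B assume "\<forall>j<k. B j \<in> X" "A = foldr (\<lambda>j acc. c j \<cdot>\<^sub>m B j + acc) [0..<k] (0\<^sub>m r r)"
    then show "\<exists>k c B. (\<forall>j<k. B j \<in> X) \<and> A = mat_comb r c B {..<k}"
      by (intro exI[of _ k] exI[of _ c] exI[of _ B]) (simp add: eq)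
  next
    fix k c B assume "\<forall>j<k. B j \<in> X" "A = mat_comb r c B {..<k}"
    then show "\<exists>k c B. (\<forall>j<k. B j \<in> X) \<and> A = foldr (\<lambda>j acc. c j \<cdot>\<^sub>m B j + acc) [0..<k] (0\<^sub>m r r)"
      by (intro exI[of _ k] exI[of _ c] exI[of _ B]) (simp add: eq)
  qed
qed

lemma mat_span_carrier: "X \<subseteq> carrier_mat r r \<Longrightarrow> A \<in> mat_span r X \<Longrightarrow> A \<in> carrier_mat r r"
  by (auto simp: mat_span_iff_comb)

lemma mat_span_mono: "X \<subseteq> Y \<Longrightarrow> mat_span r X \<subseteq> mat_span r Y"
  unfolding mat_span_def by blast

lemma mat_comb_zero_extend:
  assumes "finite I" "J \<subseteq> I"
  shows "mat_comb r (\<lambda>s. if s \<in> J then a s else 0) B I = mat_comb r a B J"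
proof -
  have "(\<Sum>s\<in>I. (if s \<in> J then a s else 0) * B s $$ ij) = (\<Sum>s\<in>J. a s * B s $$ ij)" for ij
    by (rule sum.mono_neutral_cong_right) (use assms in auto)
  then show ?thesis unfolding mat_comb_def by simp
qed

lemma mat_comb_indicator:
  assumes "finite I" "j \<in> I" "B j \<in> carrier_mat r r"
  shows "mat_comb r (\<lambda>s. if s = j then 1 else 0) B I = B j"
proof -
  have "(\<Sum>s\<in>I. (if s = j then 1 else 0) * B s $$ ij) = (\<Sum>s\<in>I. if s = j then B s $$ ij else 0)"
    for ij by (rule sum.cong) auto
  then show ?thesis using assms by (auto intro!: eq_matI)
qed

lemma mat_comb_reindex:
  assumes "bij_betw h I S"
  shows "mat_comb r c C S = mat_comb r (c \<circ> h) (C \<circ> h) I"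
  by (rule eq_matI) (simp_all add: sum.reindex_bij_betw[OF assms, symmetric])

lemma mat_comb_substitute:
  assumes "\<And>e. e \<in> I \<Longrightarrow> B e = mat_comb r (A e) C S"
  shows "mat_comb r c B I = mat_comb r (\<lambda>s. \<Sum>e\<in>I. c e * A e s) C S"
proof (rule eq_matI)
  fix i j assume "i < dim_row (mat_comb r (\<lambda>s. \<Sum>e\<in>I. c e * A e s) C S)"
    "j < dim_col (mat_comb r (\<lambda>s. \<Sum>e\<in>I. c e * A e s) C S)"
  then have ij: "i < r" "j < r" by auto
  have "(\<Sum>e\<in>I. c e * B e $$ (i,j)) = (\<Sum>e\<in>I. c e * (\<Sum>s\<in>S. A e s * C s $$ (i,j)))"
    using assms ij by (auto intro!: sum.cong)
  also have "\<dots> = (\<Sum>s\<in>S. (\<Sum>e\<in>I. c e * A e s) * C s $$ (i,j))"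
    by (simp add: sum_distrib_left sum_distrib_right sum.swap[of _ S] mult.assoc)
  finally show "mat_comb r c B I $$ (i,j) = mat_comb r (\<lambda>s. \<Sum>e\<in>I. c e * A e s) C S $$ (i,j)"
    using ij by simp
qed auto

lemma mat_span_gen:
  assumes "X \<subseteq> carrier_mat r r" "x \<in> X"
  shows "x \<in> mat_span r X"
proof -
  have "x = mat_comb r (\<lambda>_. 1) (\<lambda>_. x) {..<1}"
    using assms by (auto intro!: eq_matI)
  then show ?thesis unfolding mat_span_iff_comb[OF assms(1)] using assms(2)
    by (intro exI[of _ 1] exI[of _ "\<lambda>_. 1"] exI[of _ "\<lambda>_. x"]) auto
qed

lemma sum_lessThan_add:
  "(\<Sum>x<(k1::nat) + k2. (f x :: 'a::comm_monoid_add)) = (\<Sum>x<k1. f x) + (\<Sum>x<k2. f (k1 + x))"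
  by (induction k2) (auto simp: add.assoc)

lemma mat_span_add:
  assumes X: "X \<subseteq> carrier_mat r r" and "A \<in> mat_span r X" "B \<in> mat_span r X"
  shows "A + B \<in> mat_span r X"
proof -
  obtain k1 c1 B1 where 1: "\<forall>j<k1. B1 j \<in> X" "A = mat_comb r c1 B1 {..<k1}"
    using assms(2) unfolding mat_span_iff_comb[OF X] by blast
  obtain k2 c2 B2 where 2: "\<forall>j<k2. B2 j \<in> X" "B = mat_comb r c2 B2 {..<k2}"
    using assms(3) unfolding mat_span_iff_comb[OF X] by blast
  define c where "c j = (if j < k1 then c1 j else c2 (j - k1))" for j
  define BB where "BB j = (if j < k1 then B1 j else B2 (j - k1))" for j
  have "\<forall>j<k1 + k2. BB j \<in> X" using 1 2 unfolding BB_def by auto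
  moreover have "A + B = mat_comb r c BB {..<k1 + k2}"
    unfolding 1(2) 2(2) by (rule eq_matI) (simp_all add: sum_lessThan_add c_def BB_def)
  ultimately show ?thesis unfolding mat_span_iff_comb[OF X] by blast
qed

lemma mat_span_smult:
  assumes X: "X \<subseteq> carrier_mat r r" and "A \<in> mat_span r X"
  shows "a \<cdot>\<^sub>m A \<in> mat_span r X"
proof -
  obtain k c B where 1: "\<forall>j<k. B j \<in> X" "A = mat_comb r c B {..<k}"
    using assms(2) unfolding mat_span_iff_comb[OF X] by blast
  have "a \<cdot>\<^sub>m A = mat_comb r (\<lambda>j. a * c j) B {..<k}"
    unfolding 1 by (auto intro!: eq_matI simp: sum_distrib_left mult.assoc)
  then show ?thesis using 1 unfolding mat_span_iff_comb[OF X] by blast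
qed

lemma mat_comb_in_span:
  assumes X: "X \<subseteq> carrier_mat r r" and "finite I" and "\<And>i. i \<in> I \<Longrightarrow> B i \<in> mat_span r X"
  shows "mat_comb r c B I \<in> mat_span r X"
  using assms(2,3)
proof (induction I rule: finite_induct)
  case empty
  have "\<exists>k c' B'. (\<forall>j<k. B' j \<in> X) \<and> mat_comb r c B {} = mat_comb r c' B' {..<k}"
    by (rule exI[of _ 0]) auto
  then show ?case unfolding mat_span_iff_comb[OF X] .
next
  case (insert i I)
  have Bi: "B i \<in> carrier_mat r r" using insert.prems mat_span_carrier[OF X] by auto
  have "mat_comb r c B (insert i I) = c i \<cdot>\<^sub>m B i + mat_comb r c B I"
    using insert.hyps Bi by (auto intro!: eq_matI)
  then show ?case
    using insert mat_span_add[OF X] mat_span_smult[OF X] by auto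
qed

lemma mat_span_trans:
  assumes X: "X \<subseteq> carrier_mat r r" and Y: "Y \<subseteq> mat_span r X"
  shows "mat_span r Y \<subseteq> mat_span r X"
proof
  fix A assume A: "A \<in> mat_span r Y"
  have "Y \<subseteq> carrier_mat r r" using Y mat_span_carrier[OF X] by auto
  then obtain k c B where "\<forall>j<k. B j \<in> Y" "A = mat_comb r c B {..<k}"
    using A mat_span_iff_comb by blast
  then show "A \<in> mat_span r X" using mat_comb_in_span[OF X, of "{..<k}" B c] Y by auto
qed

lemma mat_span_image_comb:
  assumes I: "finite I" and hc: "B ` I \<subseteq> carrier_mat r r" and Y: "Y \<in> mat_span r (B ` I)"
  obtains a where "Y = mat_comb r a B I"
proof -
  obtain k c B' where 1: "\<forall>j<k. B' j \<in> B ` I" "Y = mat_comb r c B' {..<k}"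
    using Y unfolding mat_span_iff_comb[OF hc] by blast
  then have "\<forall>j<k. \<exists>i\<in>I. B' j = B i" by blast
  then obtain \<iota> where io: "\<forall>j<k. \<iota> j \<in> I \<and> B' j = B (\<iota> j)" by metis
  define a where "a i = (\<Sum>j\<in>{j\<in>{..<k}. \<iota> j = i}. c j)" for i
  have "Y = mat_comb r a B I"
  proof (rule eq_matI)
    fix x y assume "x < dim_row (mat_comb r a B I)" "y < dim_col (mat_comb r a B I)"
    then have xy: "x < r" "y < r" by auto
    have "(\<Sum>j<k. c j * B' j $$ (x,y)) = (\<Sum>j<k. c j * B (\<iota> j) $$ (x,y))"
      using io by (auto intro!: sum.cong)
    also have "\<dots> = (\<Sum>i\<in>I. \<Sum>j\<in>{j\<in>{..<k}. \<iota> j = i}. c j * B (\<iota> j) $$ (x,y))"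
      by (rule sum.group[symmetric]) (use io I in auto)
    also have "\<dots> = (\<Sum>i\<in>I. a i * B i $$ (x,y))"
      unfolding a_def sum_distrib_right by (auto intro!: sum.cong)
    finally show "Y $$ (x, y) = mat_comb r a B I $$ (x, y)" using xy 1 by simp
  qed (use 1 in auto)
  then show ?thesis by (rule that)
qed

lemma homogeneous_system_nontrivial:
  fixes a :: "nat \<Rightarrow> nat \<Rightarrow> 'a::field"
  assumes "R < k"
  obtains v where "\<exists>j<k. v j \<noteq> 0" "\<And>i. i < R \<Longrightarrow> (\<Sum>j<k. a i j * v j) = 0"
proof -
  define Z where "Z = mat k k (\<lambda>(i,j). if i < R then a i j else 0)"
  have Z: "Z \<in> carrier_mat k k" unfolding Z_def by simp
  have Zr: "Z = mat\<^sub>r k k (\<lambda>i. if i = k - 1 then 0\<^sub>v k else row Z i)"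
  proof (rule eq_matI)
    fix i j assume "i < dim_row (mat\<^sub>r k k (\<lambda>i. if i = k - 1 then 0\<^sub>v k else row Z i))"
      "j < dim_col (mat\<^sub>r k k (\<lambda>i. if i = k - 1 then 0\<^sub>v k else row Z i))"
    then have "i < k" "j < k" by auto
    then show "Z $$ (i, j) = mat\<^sub>r k k (\<lambda>i. if i = k - 1 then 0\<^sub>v k else row Z i) $$ (i, j)"
      using assms Z by (cases "i = k - 1") (simp_all add: Z_def)
  qed (simp_all add: Z_def)
  have "row Z \<in> {0..<k} \<rightarrow> carrier_vec k" using Z by auto
  then have "det Z = 0"
    by (subst Zr) (rule det_row_0, use assms in simp)
  then obtain v where v: "v \<in> carrier_vec k" "v \<noteq> 0\<^sub>v k" "Z *\<^sub>v v = 0\<^sub>v k"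
    using det_0_iff_vec_prod_zero_field[OF Z] by auto
  show ?thesis
  proof
    show "\<exists>j<k. v $ j \<noteq> 0"
    proof (rule ccontr)
      assume "\<not> (\<exists>j<k. v $ j \<noteq> 0)"
      then have "v = 0\<^sub>v k" using v(1) by (intro eq_vecI) auto
      then show False using v(2) by simp
    qed
    show "(\<Sum>j<k. a i j * v $ j) = 0" if "i < R" for i
    proof -
      have "(Z *\<^sub>v v) $ i = (\<Sum>j<k. a i j * v $ j)"
        using that assms v(1) by (simp add: Z_def scalar_prod_def lessThan_atLeast0)
      then show ?thesis using v(3) that assms by simp
    qed
  qed
qed

lemma independent_card_le:
  fixes C :: "nat \<Rightarrow> 'a::field mat"
  assumes S: "finite S" and indep: "\<And>a. mat_comb r a C S = 0\<^sub>m r r \<Longrightarrow> \<forall>e\<in>S. a e = 0"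
  shows "card S \<le> r^2"
proof (rule ccontr)
  assume "\<not> card S \<le> r^2"
  then have less: "r * r < card S" by (simp add: power2_eq_square)
  obtain h where h: "bij_betw h {..<card S} S"
    using ex_bij_betw_nat_finite[OF S] by (auto simp: atLeast0LessThan)
  obtain v where v: "\<exists>j<card S. v j \<noteq> 0"
    and sol: "\<And>i. i < r * r \<Longrightarrow> (\<Sum>j<card S. C (h j) $$ (i div r, i mod r) * v j) = 0"
    using homogeneous_system_nontrivial[OF less, of "\<lambda>i j. C (h j) $$ (i div r, i mod r)"] by blast
  define a where "a = v \<circ> the_inv_into {..<card S} h"
  have av: "(a \<circ> h) j = v j" if "j < card S" for j
    using that h by (simp add: a_def bij_betw_def the_inv_into_f_f)
  have "mat_comb r a C S = mat_comb r (a \<circ> h) (C \<circ> h) {..<card S}"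
    by (rule mat_comb_reindex[OF h])
  also have "\<dots> = 0\<^sub>m r r"
  proof (rule eq_matI)
    fix i j assume "i < dim_row (0\<^sub>m r r :: 'a mat)" "j < dim_col (0\<^sub>m r r :: 'a mat)"
    then have ij: "i < r" "j < r" by auto
    have "Suc i * r \<le> r * r" using ij by (intro mult_le_mono1) simp
    then have "i * r + j < r * r" using ij by simp
    from sol[OF this] ij av
    show "mat_comb r (a \<circ> h) (C \<circ> h) {..<card S} $$ (i,j) = 0\<^sub>m r r $$ (i,j)"
      by (simp add: mult.commute)
  qed auto
  finally have "\<forall>e\<in>S. a e = 0" by (rule indep)
  moreover obtain j where j: "j < card S" "v j \<noteq> 0" using v by blast
  moreover have "h j \<in> S" using bij_betw_apply[OF h] j(1) by simp
  ultimately show False using av[OF j(1)] by simp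
qed

text \<open>The pivots of a finite sequence C 0, \<dots>, C (T - 1): the indices where the span grows.
  The pivot matrices form a basis of the span of the whole sequence.\<close>
definition pivots :: "nat \<Rightarrow> (nat \<Rightarrow> 'a::field mat) \<Rightarrow> nat \<Rightarrow> nat set" where
  "pivots r C T = {e. e < T \<and> C e \<notin> mat_span r (C ` {..<e})}"

lemma pivots_span:
  assumes C: "\<And>e. e < T \<Longrightarrow> C e \<in> carrier_mat r r"
  shows "e < T \<Longrightarrow> C e \<in> mat_span r (C ` (pivots r C T \<inter> {..e}))"
proof (induction e rule: less_induct)
  case (less e)
  let ?S = "pivots r C T"
  have Sc: "C ` (?S \<inter> X) \<subseteq> carrier_mat r r" for X using C by (auto simp: pivots_def)
  show ?case
  proof (cases "e \<in> ?S")
    case True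
    then show ?thesis by (intro mat_span_gen[OF Sc]) auto
  next
    case False
    then have "C e \<in> mat_span r (C ` {..<e})" using less.prems by (simp add: pivots_def)
    also have "\<dots> \<subseteq> mat_span r (C ` (?S \<inter> {..e}))"
    proof (rule mat_span_trans[OF Sc], rule image_subsetI)
      fix e' assume "e' \<in> {..<e}"
      then have "C e' \<in> mat_span r (C ` (?S \<inter> {..e'}))" using less by simp
      also have "\<dots> \<subseteq> mat_span r (C ` (?S \<inter> {..e}))"
        using \<open>e' \<in> {..<e}\<close> by (intro mat_span_mono image_mono) auto
      finally show "C e' \<in> mat_span r (C ` (?S \<inter> {..e}))" .
    qed
    finally show ?thesis .
  qed
qed

lemma pivots_triangular:
  assumes C: "\<And>e. e < T \<Longrightarrow> C e \<in> carrier_mat r r"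
  obtains A where "\<And>e. e < T \<Longrightarrow> C e = mat_comb r (A e) C (pivots r C T)"
    and "\<And>e s. e < s \<Longrightarrow> A e s = 0" and "\<And>e. e \<in> pivots r C T \<Longrightarrow> A e e = 1"
proof -
  let ?S = "pivots r C T"
  have fin: "finite ?S" by (simp add: pivots_def)
  have "\<exists>a. (e < T \<longrightarrow> C e = mat_comb r a C ?S) \<and> (\<forall>s. e < s \<longrightarrow> a s = 0) \<and> (e \<in> ?S \<longrightarrow> a e = 1)"
    for e
  proof (cases "e \<in> ?S")
    case True
    then have "C e = mat_comb r (\<lambda>s. if s = e then 1 else 0) C ?S"
      using mat_comb_indicator[OF fin True C] by (simp add: pivots_def)
    then show ?thesis using True by (intro exI[of _ "\<lambda>s. if s = e then 1 else 0"]) auto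
  next
    case False
    show ?thesis
    proof (cases "e < T")
      case True
      have "?S \<inter> {..e} = ?S \<inter> {..<e}" using False by (auto simp: le_less)
      moreover have "C e \<in> mat_span r (C ` (?S \<inter> {..e}))"
        by (rule pivots_span[of T C r e]) (use C True in auto)
      ultimately have "C e \<in> mat_span r (C ` (?S \<inter> {..<e}))" by simp
      moreover have "C ` (?S \<inter> {..<e}) \<subseteq> carrier_mat r r" using C by (auto simp: pivots_def)
      ultimately obtain a where "C e = mat_comb r a C (?S \<inter> {..<e})"
        using mat_span_image_comb[of "?S \<inter> {..<e}" C r "C e"] by blast
      then have "C e = mat_comb r (\<lambda>s. if s \<in> ?S \<inter> {..<e} then a s else 0) C ?S"
        using mat_comb_zero_extend[OF fin, of "?S \<inter> {..<e}" r a C] by simp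
      then show ?thesis using False by (intro exI[of _ "\<lambda>s. if s \<in> ?S \<inter> {..<e} then a s else 0"]) auto
    qed (use False in \<open>intro exI[of _ "\<lambda>_. 0"], auto\<close>)
  qed
  then obtain A where "\<And>e. (e < T \<longrightarrow> C e = mat_comb r (A e) C ?S) \<and> (\<forall>s. e < s \<longrightarrow> A e s = 0) \<and> (e \<in> ?S \<longrightarrow> A e e = 1)"
    by metis
  then show ?thesis using that by blast
qed

text \<open>The pivot matrices are linearly independent: in a vanishing combination, the largest pivot
  with nonzero coefficient would lie in the span of its predecessors.\<close>
lemma pivots_independent:
  assumes C: "\<And>e. e < T \<Longrightarrow> C e \<in> carrier_mat r r"
    and zero: "mat_comb r a C (pivots r C T) = 0\<^sub>m r r"
  shows "\<forall>e\<in>pivots r C T. a e = 0"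
proof (rule ccontr)
  let ?S = "pivots r C T"
  have fin: "finite ?S" by (simp add: pivots_def)
  assume "\<not> (\<forall>e\<in>?S. a e = 0)"
  then have NZ: "finite {s\<in>?S. a s \<noteq> 0}" "{s\<in>?S. a s \<noteq> 0} \<noteq> {}" using fin by auto
  define m where "m = Max {s\<in>?S. a s \<noteq> 0}"
  have mS: "m \<in> ?S" "a m \<noteq> 0" using Max_in[OF NZ] by (auto simp: m_def)
  have above: "a s = 0" if "s \<in> ?S" "m < s" for s
    using Max_ge[OF NZ(1), of s] that by (force simp: m_def)
  have mT: "m < T" using mS by (simp add: pivots_def)
  have "C m = mat_comb r (\<lambda>s. - a s / a m) C (?S \<inter> {..<m})"
  proof (rule eq_matI)
    fix i j assume "i < dim_row (mat_comb r (\<lambda>s. - a s / a m) C (?S \<inter> {..<m}))"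
      "j < dim_col (mat_comb r (\<lambda>s. - a s / a m) C (?S \<inter> {..<m}))"
    then have ij: "i < r" "j < r" by auto
    have "0 = (\<Sum>s\<in>?S. a s * C s $$ (i,j))"
      using arg_cong[OF zero, of "\<lambda>A. A $$ (i,j)"] ij by simp
    also have "\<dots> = (\<Sum>s\<in>?S \<inter> {..m}. a s * C s $$ (i,j))"
      by (rule sum.mono_neutral_right) (use fin above in \<open>auto simp: not_le\<close>)
    also have "?S \<inter> {..m} = insert m (?S \<inter> {..<m})" using mS by auto
    also have "(\<Sum>s\<in>insert m (?S \<inter> {..<m}). a s * C s $$ (i,j))
        = a m * C m $$ (i,j) + (\<Sum>s\<in>?S \<inter> {..<m}. a s * C s $$ (i,j))"
      using fin by simp
    finally have "0 = a m * C m $$ (i,j) + (\<Sum>s\<in>?S \<inter> {..<m}. a s * C s $$ (i,j))" .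
    then have eq: "a m * C m $$ (i,j) = - (\<Sum>s\<in>?S \<inter> {..<m}. a s * C s $$ (i,j))"
      by (simp add: eq_neg_iff_add_eq_0)
    have "C m $$ (i,j) = (a m * C m $$ (i,j)) / a m" using mS(2) by simp
    also have "\<dots> = (\<Sum>s\<in>?S \<inter> {..<m}. - a s / a m * C s $$ (i,j))"
      unfolding eq sum_negf[symmetric] sum_divide_distrib using mS(2)
      by (intro sum.cong) (auto simp: field_simps)
    finally show "C m $$ (i,j) = mat_comb r (\<lambda>s. - a s / a m) C (?S \<inter> {..<m}) $$ (i,j)"
      using ij by simp
  qed (use C mT in auto)
  also have "\<dots> \<in> mat_span r (C ` {..<m})"
    using C mT by (intro mat_comb_in_span) (auto intro!: mat_span_gen)
  finally show False using mS(1) by (simp add: pivots_def)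
qed

text \<open>Cramer's rule for matrix-valued unknowns: if the Q l arise from the B j
  through an invertible coefficient matrix G, then every B j lies in the span of the
  Q l.\<close>
lemma invertible_system_span:
  fixes G :: "'a::field mat"
  assumes G: "G \<in> carrier_mat d d" and detG: "det G \<noteq> 0"
    and B: "\<And>j. j < d \<Longrightarrow> B j \<in> carrier_mat r r"
    and Q: "\<And>l. l < d \<Longrightarrow> Q l = mat_comb r (\<lambda>j. G $$ (l,j)) B {..<d}"
    and j0: "j0 < d"
  shows "B j0 \<in> mat_span r (Q ` {..<d})"
proof -
  define c where "c l = adj_mat G $$ (j0,l) / det G" for l
  have inverse: "(\<Sum>l<d. c l * G $$ (l,j)) = (if j = j0 then 1 else 0)" if "j < d" for j
  proof -
    have "(adj_mat G * G) $$ (j0,j) = (\<Sum>l<d. adj_mat G $$ (j0,l) * G $$ (l,j))"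
      using adj_mat(1)[OF G] G j0 that by (simp add: scalar_prod_def lessThan_atLeast0)
    moreover have "(adj_mat G * G) $$ (j0,j) = (if j = j0 then det G else 0)"
      using adj_mat(3)[OF G] j0 that by simp
    ultimately have "(\<Sum>l<d. adj_mat G $$ (j0,l) * G $$ (l,j)) = (if j = j0 then det G else 0)"
      by simp
    then show ?thesis using detG by (simp add: c_def sum_divide_distrib[symmetric])
  qed
  have "mat_comb r c Q {..<d} = mat_comb r (\<lambda>j. \<Sum>l<d. c l * G $$ (l,j)) B {..<d}"
    by (rule mat_comb_substitute) (use Q in simp)
  also have "\<dots> = mat_comb r (\<lambda>j. if j = j0 then 1 else 0) B {..<d}"
    by (rule mat_comb_cong) (simp add: inverse)
  also have "\<dots> = B j0"
    by (rule mat_comb_indicator) (use j0 B in auto)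
  finally have "B j0 = mat_comb r c Q {..<d}" ..
  also have "\<dots> \<in> mat_span r (Q ` {..<d})"
  proof (rule mat_comb_in_span)
    show Qc: "Q ` {..<d} \<subseteq> carrier_mat r r" using Q by auto
    show "Q l \<in> mat_span r (Q ` {..<d})" if "l \<in> {..<d}" for l
      using that by (intro mat_span_gen[OF Qc]) auto
  qed simp
  finally show ?thesis .
qed

lemma low_order_factor:
  fixes p :: "'a::comm_semiring_1 poly"
  assumes "\<And>k. k < a \<Longrightarrow> coeff p k = 0"
  shows "p = monom 1 a * poly_shift a p"
  using assms by (auto simp: poly_eq_iff coeff_monom_mult coeff_poly_shift not_less)

lemma coeff_mult_low_order:
  fixes p q :: "'a::comm_ring_1 poly"
  assumes p: "\<And>k. k < a \<Longrightarrow> coeff p k = 0" and q: "\<And>k. k < b \<Longrightarrow> coeff q k = 0"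
  shows "(\<forall>k<a+b. coeff (p * q) k = 0) \<and> coeff (p * q) (a+b) = coeff p a * coeff q b"
proof -
  have "p * q = (monom 1 a * poly_shift a p) * (monom 1 b * poly_shift b q)"
    by (simp only: low_order_factor[OF p, symmetric] low_order_factor[OF q, symmetric])
  also have "\<dots> = monom 1 (a+b) * (poly_shift a p * poly_shift b q)"
  proof -
    have "monom 1 (a+b) = monom 1 a * monom (1::'a) b" by (simp add: mult_monom)
    then show ?thesis by (simp add: ac_simps)
  qed
  finally show ?thesis by (simp add: coeff_monom_mult coeff_mult_0 coeff_poly_shift)
qed

lemma coeff_prod_low_order:
  fixes h :: "nat \<Rightarrow> 'a::comm_ring_1 poly"
  assumes "finite L" "\<And>l k. l \<in> L \<Longrightarrow> k < a l \<Longrightarrow> coeff (h l) k = 0"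
  shows "(\<forall>k<(\<Sum>l\<in>L. a l). coeff (\<Prod>l\<in>L. h l) k = 0) \<and>
         coeff (\<Prod>l\<in>L. h l) (\<Sum>l\<in>L. a l) = (\<Prod>l\<in>L. coeff (h l) (a l))"
  using assms
proof (induction L rule: finite_induct)
  case (insert x L)
  then have IH: "(\<forall>k<(\<Sum>l\<in>L. a l). coeff (\<Prod>l\<in>L. h l) k = 0) \<and>
         coeff (\<Prod>l\<in>L. h l) (\<Sum>l\<in>L. a l) = (\<Prod>l\<in>L. coeff (h l) (a l))" by blast
  have hx: "\<And>k. k < a x \<Longrightarrow> coeff (h x) k = 0" using insert.prems by blast
  have hL: "\<And>k. k < (\<Sum>l\<in>L. a l) \<Longrightarrow> coeff (\<Prod>l\<in>L. h l) k = 0" using IH by blast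
  from coeff_mult_low_order[OF hx hL] IH
  show ?case using insert.hyps by simp
qed simp

lemma coeff_det_low_order:
  fixes A :: "'a::comm_ring_1 poly mat"
  assumes A: "A \<in> carrier_mat d d"
    and low: "\<And>l j k. l < d \<Longrightarrow> j < d \<Longrightarrow> k < h j \<Longrightarrow> coeff (A $$ (l,j)) k = 0"
  shows "coeff (det A) (\<Sum>j<d. h j) = det (mat d d (\<lambda>(l,j). coeff (A $$ (l,j)) (h j)))"
proof -
  have "coeff (\<Prod>l\<in>{0..<d}. A $$ (l, \<pi> l)) (\<Sum>j<d. h j)
      = (\<Prod>l\<in>{0..<d}. coeff (A $$ (l, \<pi> l)) (h (\<pi> l)))" if \<pi>: "\<pi> permutes {0..<d}" for \<pi>
  proof -
    have perm: "(\<Sum>j<d. h j) = (\<Sum>l\<in>{0..<d}. h (\<pi> l))"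
      using sum.permute[OF \<pi>, of h] by (simp add: lessThan_atLeast0)
    have "\<And>l k. l \<in> {0..<d} \<Longrightarrow> k < h (\<pi> l) \<Longrightarrow> coeff (A $$ (l, \<pi> l)) k = 0"
      using low \<pi> by (simp add: permutes_in_image)
    from coeff_prod_low_order[where L = "{0..<d}" and a = "\<lambda>l. h (\<pi> l)"
        and h = "\<lambda>l. A $$ (l, \<pi> l)", OF _ this]
    show ?thesis unfolding perm by simp
  qed
  then have "coeff (det A) (\<Sum>j<d. h j)
      = (\<Sum>\<pi>\<in>{\<pi>. \<pi> permutes {0..<d}}. signof \<pi> * (\<Prod>l\<in>{0..<d}. coeff (A $$ (l, \<pi> l)) (h (\<pi> l))))"
    unfolding det_def'[OF A] by (simp add: coeff_sum of_int_poly)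
  also have "\<dots> = det (mat d d (\<lambda>(l,j). coeff (A $$ (l,j)) (h j)))"
    by (subst det_def') (auto intro!: sum.cong prod.cong simp: permutes_in_image)
  finally show ?thesis .
qed

text \<open>The Vandermonde determinant of distinct points is nonzero: a kernel vector of its
  transpose would give a nonzero polynomial of degree below d with d roots.\<close>
lemma vandermonde_det_nonzero:
  fixes w :: "nat \<Rightarrow> 'a::field"
  assumes inj: "inj_on w {..<d}"
  shows "det (mat d d (\<lambda>(l,j). w j ^ l)) \<noteq> 0"
proof
  define V where "V = mat d d (\<lambda>(l,j). w j ^ l)"
  have V: "V \<in> carrier_mat d d" unfolding V_def by simp
  assume "det (mat d d (\<lambda>(l,j). w j ^ l)) = 0"
  then have "det (transpose_mat V) = 0" using det_transpose[OF V] by (simp add: V_def)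
  then obtain v where v: "v \<in> carrier_vec d" "v \<noteq> 0\<^sub>v d" "transpose_mat V *\<^sub>v v = 0\<^sub>v d"
    using det_0_iff_vec_prod_zero_field[of "transpose_mat V" d] V by auto
  define p where "p = (\<Sum>l<d. monom (v $ l) l)"
  have coeff_p: "coeff p k = (if k < d then v $ k else 0)" for k
    unfolding p_def by (simp add: coeff_sum coeff_monom)
  have "\<exists>l<d. v $ l \<noteq> 0"
  proof (rule ccontr)
    assume "\<not> (\<exists>l<d. v $ l \<noteq> 0)"
    then have "v = 0\<^sub>v d" using v(1) by (intro eq_vecI) auto
    then show False using v(2) by simp
  qed
  then obtain l0 where l0: "l0 < d" "v $ l0 \<noteq> 0" by blast
  have p: "p \<noteq> 0" using coeff_p[of l0] l0 by auto
  have "degree p \<le> d - 1" by (rule degree_le) (auto simp: coeff_p)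
  then have deg: "degree p < d" using l0 by linarith
  have "poly p (w j) = 0" if "j < d" for j
  proof -
    have "poly p (w j) = (\<Sum>l<d. v $ l * w j ^ l)"
      unfolding p_def by (simp add: poly_sum poly_monom)
    also have "\<dots> = (transpose_mat V *\<^sub>v v) $ j"
      using that v(1) unfolding V_def
      by (auto simp: scalar_prod_def lessThan_atLeast0 mult.commute intro!: sum.cong)
    finally show ?thesis using v(3) that by simp
  qed
  then have "w ` {..<d} \<subseteq> {x. poly p x = 0}" by auto
  then have "card (w ` {..<d}) \<le> degree p"
    using card_mono[OF poly_roots_finite[OF p]] card_poly_roots_bound[OF p] le_trans by blast
  then show False using card_image[OF inj] deg by simp
qed

lemma power_inj_on:
  fixes \<omega> :: "'a::field"
  assumes "\<omega> \<noteq> 0" and ord: "\<And>k. 0 < k \<Longrightarrow> k < T \<Longrightarrow> \<omega> ^ k \<noteq> 1"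
  shows "inj_on (\<lambda>a. \<omega> ^ a) {..<T}"
proof -
  have neq: "\<omega> ^ a \<noteq> \<omega> ^ b" if "a < b" "b < T" for a b
  proof
    assume eq: "\<omega> ^ a = \<omega> ^ b"
    have "\<omega> ^ b = \<omega> ^ a * \<omega> ^ (b - a)"
      using \<open>a < b\<close> by (simp add: power_add[symmetric])
    then have "\<omega> ^ a * \<omega> ^ (b - a) = \<omega> ^ a * 1" using eq by simp
    then have "\<omega> ^ (b - a) = 1" using assms(1) by simp
    then show False using ord[of "b - a"] that by simp
  qed
  show ?thesis
  proof (rule inj_onI)
    fix a b assume "a \<in> {..<T}" "b \<in> {..<T}" "\<omega> ^ a = \<omega> ^ b"
    then show "a = b" using neq[of a b] neq[of b a] by (cases a b rule: linorder_cases) auto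
  qed
qed

text \<open>Let g_j(X) = \<Sum>_e A e (h j) X^e
  have lowest term X^(h j).  Then the polynomial matrix (g_j(\<omega>^l X))_(l,j) has a nonzero
  determinant: its coefficient in degree \<Sum>_j h j is the Vandermonde determinant of
  the distinct points \<omega>^(h j).\<close>
lemma triangular_vandermonde_det_nonzero:
  fixes A :: "nat \<Rightarrow> nat \<Rightarrow> 'a::field" and \<omega> :: 'a
  assumes low: "\<And>j e. j < d \<Longrightarrow> e < h j \<Longrightarrow> A e (h j) = 0"
    and diag: "\<And>j. j < d \<Longrightarrow> A (h j) (h j) = 1"
    and hT: "\<And>j. j < d \<Longrightarrow> h j < T"
    and inj: "inj_on (\<lambda>j. \<omega> ^ h j) {..<d}"
  shows "det (mat d d (\<lambda>(l,j). \<Sum>e<T. monom (A e (h j) * (\<omega>^l)^e) e)) \<noteq> 0"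
proof -
  let ?G = "mat d d (\<lambda>(l,j). \<Sum>e<T. monom (A e (h j) * (\<omega>^l)^e) e)"
  have coeff_G: "coeff (\<Sum>e<T. monom (A e (h j) * (\<omega>^l)^e) e) k
      = (if k < T then A k (h j) * (\<omega>^l)^k else 0)" for l j k
    by (simp add: coeff_sum coeff_monom)
  have "coeff (det ?G) (\<Sum>j<d. h j) = det (mat d d (\<lambda>(l,j). coeff (?G $$ (l,j)) (h j)))"
    by (rule coeff_det_low_order) (auto simp: coeff_G low)
  also have "mat d d (\<lambda>(l,j). coeff (?G $$ (l,j)) (h j)) = mat d d (\<lambda>(l,j). (\<omega> ^ h j) ^ l)"
  proof (rule eq_matI)
    fix l j assume "l < dim_row (mat d d (\<lambda>(l,j). (\<omega> ^ h j) ^ l))"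
      "j < dim_col (mat d d (\<lambda>(l,j). (\<omega> ^ h j) ^ l))"
    then have "l < d" "j < d" by auto
    then show "mat d d (\<lambda>(l,j). coeff (?G $$ (l,j)) (h j)) $$ (l,j) = mat d d (\<lambda>(l,j). (\<omega> ^ h j) ^ l) $$ (l,j)"
      using coeff_G[of j l "h j"] hT diag by (simp add: power_mult[symmetric] mult.commute)
  qed auto
  finally have "coeff (det ?G) (\<Sum>j<d. h j) \<noteq> 0"
    using vandermonde_det_nonzero[OF inj] by simp
  then show ?thesis by auto
qed

lemma det_eval_mat: "det (eval_mat A a) = poly (det A) (a::'a::comm_ring_1)"
proof -
  interpret comm_ring_hom "\<lambda>p. poly p a" by unfold_locales auto
  show ?thesis unfolding eval_mat_def by simp
qed

lemma eval_mat_mult: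
  fixes A B :: "'a::comm_ring_1 poly mat"
  assumes "A \<in> carrier_mat nr n" "B \<in> carrier_mat n nc"
  shows "eval_mat (A * B) a = eval_mat A a * eval_mat B a"
proof -
  interpret comm_ring_hom "\<lambda>p. poly p a" by unfold_locales auto
  show ?thesis unfolding eval_mat_def by (rule mat_hom_mult[OF assms])
qed

lemma span_from_evaluations:
  fixes C :: "nat \<Rightarrow> 'a::field mat" and x :: "nat \<Rightarrow> 'a"
  assumes C: "\<And>e. e < T \<Longrightarrow> C e \<in> carrier_mat r r"
    and A: "\<And>e. e < T \<Longrightarrow> C e = mat_comb r (A e) C S"
    and h: "bij_betw h {..<d} S" and ST: "S \<subseteq> {..<T}" and ds: "d \<le> s"
    and G: "G \<in> carrier_mat d d" "det G \<noteq> 0"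
    and G_entry: "\<And>l j. l < d \<Longrightarrow> j < d \<Longrightarrow> G $$ (l,j) = (\<Sum>e<T. A e (h j) * x l ^ e)"
    and e: "e < T"
  shows "C e \<in> mat_span r ((\<lambda>l. mat_comb r (\<lambda>e. x l ^ e) C {..<T}) ` {..<s})"
proof -
  define Q where "Q l = mat_comb r (\<lambda>e. x l ^ e) C {..<T}" for l
  have Qc: "Q ` {..<s} \<subseteq> carrier_mat r r" by (auto simp: Q_def)
  have hT: "h j < T" if "j < d" for j using bij_betw_apply[OF h] that ST by auto
  have Q_coord: "Q l = mat_comb r (\<lambda>j. G $$ (l,j)) (C \<circ> h) {..<d}" if "l < d" for l
  proof -
    have "Q l = mat_comb r (\<lambda>t. \<Sum>e<T. x l ^ e * A e t) C S"
      unfolding Q_def by (rule mat_comb_substitute) (use A in simp)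
    also have "\<dots> = mat_comb r ((\<lambda>t. \<Sum>e<T. x l ^ e * A e t) \<circ> h) (C \<circ> h) {..<d}"
      by (rule mat_comb_reindex[OF h])
    also have "\<dots> = mat_comb r (\<lambda>j. G $$ (l,j)) (C \<circ> h) {..<d}"
      by (rule mat_comb_cong) (simp add: G_entry that mult.commute)
    finally show ?thesis .
  qed
  have pivot_span: "C t \<in> mat_span r (Q ` {..<s})" if t: "t \<in> S" for t
  proof -
    obtain j where j: "j < d" "t = h j" using h t by (auto simp: bij_betw_def)
    have "(C \<circ> h) j \<in> mat_span r (Q ` {..<d})"
      by (rule invertible_system_span[OF G _ Q_coord j(1)]) (use C hT in auto)
    also have "\<dots> \<subseteq> mat_span r (Q ` {..<s})" using ds by (intro mat_span_mono image_mono) auto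
    finally show ?thesis using j(2) by simp
  qed
  have "C e = mat_comb r (A e) C S" using A[OF e] .
  also have "\<dots> \<in> mat_span r (Q ` {..<s})"
    using pivot_span bij_betw_finite[OF h] by (intro mat_comb_in_span[OF Qc]) auto
  finally show ?thesis unfolding Q_def .
qed

text \<open>P is the determinant of the
  coordinate matrix of these combinations with respect to the pivot basis.\<close>
lemma rotated_evaluations_span:
  fixes C :: "nat \<Rightarrow> 'a::field mat" and \<omega> :: 'a
  assumes C: "\<And>e. e < T \<Longrightarrow> C e \<in> carrier_mat r r" and T: "0 < T" and r: "0 < r"
    and \<omega>: "\<omega> \<noteq> 0" "\<And>k. 0 < k \<Longrightarrow> k < T \<Longrightarrow> \<omega> ^ k \<noteq> 1"
  obtains P where "P \<noteq> 0" "degree P < r^2 * T"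
    and "\<And>\<alpha> e. poly P \<alpha> \<noteq> 0 \<Longrightarrow> e < T \<Longrightarrow>
           C e \<in> mat_span r ((\<lambda>l. mat_comb r (\<lambda>e. (\<omega>^l * \<alpha>)^e) C {..<T}) ` {..<r^2})"
proof -
  let ?S = "pivots r C T"
  have fin: "finite ?S" and ST: "?S \<subseteq> {..<T}" by (auto simp: pivots_def)
  obtain A where A: "\<And>e. e < T \<Longrightarrow> C e = mat_comb r (A e) C ?S"
    and A_tri: "\<And>e s. e < s \<Longrightarrow> A e s = 0" and A_diag: "\<And>e. e \<in> ?S \<Longrightarrow> A e e = 1"
    using pivots_triangular[where C = C and T = T and r = r, OF C] by blast
  define d where "d = card ?S"
  have d: "d \<le> r^2"
    unfolding d_def by (rule independent_card_le[OF fin pivots_independent[where C = C and T = T, OF C]])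
  obtain h where h: "bij_betw h {..<d} ?S"
    using ex_bij_betw_nat_finite[OF fin] by (auto simp: d_def atLeast0LessThan)
  have hS: "\<And>j. j < d \<Longrightarrow> h j \<in> ?S" using bij_betw_apply[OF h] by simp
  define Gp where "Gp = mat d d (\<lambda>(l,j). \<Sum>e<T. monom (A e (h j) * (\<omega>^l)^e) e)"
  have Gp: "Gp \<in> carrier_mat d d" by (simp add: Gp_def)
  have nonzero: "det Gp \<noteq> 0" unfolding Gp_def
  proof (rule triangular_vandermonde_det_nonzero)
    have "inj_on (\<lambda>a. \<omega> ^ a) ?S" by (rule inj_on_subset[OF power_inj_on[OF \<omega>] ST])
    then show "inj_on (\<lambda>j. \<omega> ^ h j) {..<d}"
      using comp_inj_on[OF bij_betw_imp_inj_on[OF h]] bij_betw_imp_surj_on[OF h] by (simp add: o_def)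
    show "\<And>j e. j < d \<Longrightarrow> e < h j \<Longrightarrow> A e (h j) = 0" using A_tri by blast
    show "\<And>j. j < d \<Longrightarrow> A (h j) (h j) = 1" using A_diag hS by blast
    show "\<And>j. j < d \<Longrightarrow> h j < T" using hS ST by blast
  qed
  have "degree (det Gp) \<le> (T - 1) * d"
    by (rule degree_det_le[OF _ Gp]) (auto simp: Gp_def coeff_sum coeff_monom intro!: degree_le)
  also have "\<dots> \<le> (T - 1) * r^2" using d by simp
  also have "\<dots> < r^2 * T" using T r by (cases T) (auto simp: algebra_simps)
  finally have degree: "degree (det Gp) < r^2 * T" .
  show ?thesis
  proof (rule that[OF nonzero degree])
    fix \<alpha> e assume \<alpha>: "poly (det Gp) \<alpha> \<noteq> 0" and e: "e < T"
    show "C e \<in> mat_span r ((\<lambda>l. mat_comb r (\<lambda>e. (\<omega>^l * \<alpha>)^e) C {..<T}) ` {..<r^2})"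
    proof (rule span_from_evaluations[where C = C and T = T and r = r, OF C A h ST d _ _ _ e])
      show "eval_mat Gp \<alpha> \<in> carrier_mat d d" using Gp by (simp add: eval_mat_def)
      show "det (eval_mat Gp \<alpha>) \<noteq> 0" using \<alpha> by (simp add: det_eval_mat)
      show "eval_mat Gp \<alpha> $$ (l,j) = (\<Sum>e<T. A e (h j) * (\<omega>^l * \<alpha>)^e)"
        if "l < d" "j < d" for l j
        using that by (simp add: eval_mat_def Gp_def poly_sum poly_monom power_mult_distrib mult.assoc)
    qed
  qed
qed

lemma prod_mats_Suc: "prod_mats r (Suc D) A = prod_mats r D A * A D"
  unfolding prod_mats_def by simp

lemma prod_mats_carrier:
  "(\<And>i. i < D \<Longrightarrow> A i \<in> carrier_mat r r) \<Longrightarrow> prod_mats r D A \<in> carrier_mat r r"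
  by (induction D) (auto simp: prod_mats_Suc, simp add: prod_mats_def)

lemma eval_mat_prod_mats:
  fixes A :: "nat \<Rightarrow> 'a::comm_ring_1 poly mat"
  assumes "\<And>i. i < D \<Longrightarrow> A i \<in> carrier_mat r r"
  shows "eval_mat (prod_mats r D A) x = prod_mats r D (\<lambda>i. eval_mat (A i) x)"
  using assms
proof (induction D)
  case 0
  then show ?case by (auto intro!: eq_matI simp: prod_mats_def eval_mat_def)
next
  case (Suc D)
  have P: "prod_mats r D A \<in> carrier_mat r r" using Suc.prems by (intro prod_mats_carrier) auto
  have AD: "A D \<in> carrier_mat r r" using Suc.prems by simp
  show ?case using Suc by (simp add: prod_mats_Suc eval_mat_mult[OF P AD])
qed

lemma degree_prod_mats:
  fixes A :: "nat \<Rightarrow> 'a::comm_ring_1 poly mat"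
  assumes A: "\<And>i. i < D \<Longrightarrow> A i \<in> carrier_mat r r"
    and deg: "\<And>i a b. i < D \<Longrightarrow> a < r \<Longrightarrow> b < r \<Longrightarrow> degree (A i $$ (a,b)) \<le> k"
  shows "a < r \<Longrightarrow> b < r \<Longrightarrow> degree (prod_mats r D A $$ (a,b)) \<le> D * k"
  using A deg
proof (induction D arbitrary: a b)
  case 0
  then show ?case by (simp add: prod_mats_def one_mat_def)
next
  case (Suc D)
  have P: "prod_mats r D A \<in> carrier_mat r r" using Suc.prems by (intro prod_mats_carrier) auto
  have AD: "A D \<in> carrier_mat r r" using Suc.prems by simp
  have "prod_mats r (Suc D) A $$ (a,b) = (\<Sum>c<r. prod_mats r D A $$ (a,c) * A D $$ (c,b))"
    using Suc.prems(1,2) P AD by (simp add: prod_mats_Suc scalar_prod_def lessThan_atLeast0)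
  also have "degree \<dots> \<le> D * k + k"
  proof (rule degree_sum_le)
    fix c assume "c \<in> {..<r}"
    then have "degree (prod_mats r D A $$ (a,c)) \<le> D * k" "degree (A D $$ (c,b)) \<le> k"
      using Suc by auto
    then show "degree (prod_mats r D A $$ (a,c) * A D $$ (c,b)) \<le> D * k + k"
      using degree_mult_le[of "prod_mats r D A $$ (a,c)" "A D $$ (c,b)"] by linarith
  qed simp
  finally show ?case by simp
qed

lemma composed_product_polynomial:
  fixes A :: "nat \<Rightarrow> 'a::idom poly mat" and f :: "nat \<Rightarrow> 'a poly"
  assumes "0 < D" "0 < n" "0 < m"
    and A: "\<And>i. i < D \<Longrightarrow> A i \<in> carrier_mat r r"
    and A_deg: "\<And>i a b. i < D \<Longrightarrow> a < r \<Longrightarrow> b < r \<Longrightarrow> degree (A i $$ (a,b)) < n"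
    and f_deg: "\<And>i. i < D \<Longrightarrow> degree (f i) \<le> m"
  obtains P where "P \<in> carrier_mat r r"
    and "\<And>a b. a < r \<Longrightarrow> b < r \<Longrightarrow> degree (P $$ (a,b)) < D * n * m"
    and "\<And>x. prod_mats r D (\<lambda>i. eval_mat (A i) (poly (f i) x)) = eval_mat P x"
proof
  define B where "B i = map_mat (\<lambda>q. q \<circ>\<^sub>p f i) (A i)" for i
  have B: "\<And>i. i < D \<Longrightarrow> B i \<in> carrier_mat r r" using A by (simp add: B_def)
  show "prod_mats r D B \<in> carrier_mat r r" using B by (rule prod_mats_carrier)
  have "eval_mat (B i) x = eval_mat (A i) (poly (f i) x)" for i x
    unfolding eval_mat_def B_def by (rule eq_matI) (simp_all add: poly_pcompose)
  then show "prod_mats r D (\<lambda>i. eval_mat (A i) (poly (f i) x)) = eval_mat (prod_mats r D B) x" for x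
    by (simp add: eval_mat_prod_mats[OF B])
  have degB: "degree (B i $$ (a,b)) \<le> (n - 1) * m" if "i < D" "a < r" "b < r" for i a b
  proof -
    have "degree (B i $$ (a,b)) = degree (A i $$ (a,b)) * degree (f i)"
      using that A[OF that(1)] by (simp add: B_def degree_pcompose)
    also have "\<dots> \<le> (n - 1) * m" using A_deg[OF that] f_deg[OF that(1)] by (intro mult_mono) auto
    finally show ?thesis .
  qed
  have "degree (prod_mats r D B $$ (a,b)) \<le> D * ((n - 1) * m)" if "a < r" "b < r" for a b
    by (rule degree_prod_mats[where A = B]) (use B degB that in auto)
  moreover have "D * ((n - 1) * m) < D * n * m" using assms(1-3) by (cases n) auto
  ultimately show "degree (prod_mats r D B $$ (a,b)) < D * n * m" if "a < r" "b < r" for a b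
    using that le_less_trans by blast
qed

lemma poly_truncated_sum:
  fixes p :: "'a::comm_semiring_1 poly"
  assumes "degree p < K"
  shows "poly p x = (\<Sum>s<K. coeff p s * x ^ s)"
  unfolding poly_altdef by (rule sum.mono_neutral_left) (use assms in \<open>auto simp: coeff_eq_0\<close>)

lemma sum_mod_div_square:
  "(\<Sum>e<K * K. F (e mod K) (e div K)) = (\<Sum>s<K. \<Sum>t<(K::nat). F s t)"
proof -
  have "(\<Sum>e<K * K. F (e mod K) (e div K)) = (\<Sum>(s,t)\<in>{..<K} \<times> {..<K}. F s t)"
  proof (rule sum.reindex_bij_witness[where i = "\<lambda>(s,t). s + K * t" and j = "\<lambda>e. (e mod K, e div K)"])
    fix e assume "e \<in> {..<K * K}"
    then have e: "e < K * K" by simp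
    then have "0 < K" by (cases K) auto
    then show "(e mod K, e div K) \<in> {..<K} \<times> {..<K}"
      using e by (simp add: div_less_iff_less_mult mult.commute)
  next
    fix st assume "st \<in> {..<K} \<times> {..<K}"
    then obtain s t where st: "st = (s,t)" "s < K" "t < K" by auto
    have "K * t + K \<le> K * K" using st(3) mult_le_mono2[of "Suc t" K K] by simp
    then show "(\<lambda>(s,t). s + K * t) st \<in> {..<K * K}" using st by simp
  qed auto
  also have "\<dots> = (\<Sum>s<K. \<Sum>t<K. F s t)" by (rule sum.cartesian_product[symmetric])
  finally show ?thesis .
qed

text \<open>Separation of variables: the coefficient of x^s y^t in P(x) Q(y), indexed
  by e = s + K t.\<close>
definition coeff_pair_mat :: "nat \<Rightarrow> nat \<Rightarrow> 'a::comm_ring_1 poly mat \<Rightarrow> 'a poly mat \<Rightarrow> nat \<Rightarrow> 'a mat" where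
  "coeff_pair_mat r K P Q e =
     mat r r (\<lambda>(a,b). \<Sum>c<r. coeff (P $$ (a,c)) (e mod K) * coeff (Q $$ (c,b)) (e div K))"

lemma separated_expansion:
  fixes P Q :: "'a::comm_ring_1 poly mat"
  assumes P: "P \<in> carrier_mat r r" and Q: "Q \<in> carrier_mat r r"
    and deg_P: "\<And>a b. a < r \<Longrightarrow> b < r \<Longrightarrow> degree (P $$ (a,b)) < K"
    and deg_Q: "\<And>a b. a < r \<Longrightarrow> b < r \<Longrightarrow> degree (Q $$ (a,b)) < K"
  shows "eval_mat P x * eval_mat Q y
           = mat_comb r (\<lambda>e. x ^ (e mod K) * y ^ (e div K)) (coeff_pair_mat r K P Q) {..<K^2}"
proof (rule eq_matI)
  fix a b assume "a < dim_row (mat_comb r (\<lambda>e. x ^ (e mod K) * y ^ (e div K)) (coeff_pair_mat r K P Q) {..<K^2})"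
    "b < dim_col (mat_comb r (\<lambda>e. x ^ (e mod K) * y ^ (e div K)) (coeff_pair_mat r K P Q) {..<K^2})"
  then have a: "a < r" and b: "b < r" by auto
  let ?p = "\<lambda>c s. coeff (P $$ (a,c)) s" and ?q = "\<lambda>c t. coeff (Q $$ (c,b)) t"
  have "(eval_mat P x * eval_mat Q y) $$ (a,b) = (\<Sum>c<r. poly (P $$ (a,c)) x * poly (Q $$ (c,b)) y)"
    using a b P Q by (simp add: eval_mat_def scalar_prod_def lessThan_atLeast0)
  also have "\<dots> = (\<Sum>c<r. (\<Sum>s<K. ?p c s * x ^ s) * (\<Sum>t<K. ?q c t * y ^ t))"
  proof (rule sum.cong[OF refl])
    fix c assume "c \<in> {..<r}"
    then have c: "c < r" by simp
    show "poly (P $$ (a,c)) x * poly (Q $$ (c,b)) y = (\<Sum>s<K. ?p c s * x ^ s) * (\<Sum>t<K. ?q c t * y ^ t)"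
      using poly_truncated_sum[OF deg_P[OF a c]] poly_truncated_sum[OF deg_Q[OF c b]] by simp
  qed
  also have "\<dots> = (\<Sum>c<r. \<Sum>s<K. \<Sum>t<K. (?p c s * x ^ s) * (?q c t * y ^ t))"
    by (simp add: sum_product)
  also have "\<dots> = (\<Sum>s<K. \<Sum>t<K. \<Sum>c<r. (?p c s * x ^ s) * (?q c t * y ^ t))"
    by (subst sum.swap) (rule sum.cong[OF refl], rule sum.swap)
  also have "\<dots> = (\<Sum>s<K. \<Sum>t<K. x ^ s * y ^ t * (\<Sum>c<r. ?p c s * ?q c t))"
    by (simp add: sum_distrib_left ac_simps)
  also have "\<dots> = (\<Sum>e<K * K. x ^ (e mod K) * y ^ (e div K) * (\<Sum>c<r. ?p c (e mod K) * ?q c (e div K)))"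
    by (rule sum_mod_div_square[symmetric])
  also have "\<dots> = mat_comb r (\<lambda>e. x ^ (e mod K) * y ^ (e div K)) (coeff_pair_mat r K P Q) {..<K^2} $$ (a,b)"
    using a b by (simp add: coeff_pair_mat_def power2_eq_square)
  finally show "(eval_mat P x * eval_mat Q y) $$ (a,b) = \<dots>" .
qed (use P Q in \<open>auto simp: eval_mat_def\<close>)

lemma separated_expansion_diagonal:
  fixes P Q :: "'a::comm_ring_1 poly mat"
  assumes "P \<in> carrier_mat r r" "Q \<in> carrier_mat r r"
    and "\<And>a b. a < r \<Longrightarrow> b < r \<Longrightarrow> degree (P $$ (a,b)) < K"
    and "\<And>a b. a < r \<Longrightarrow> b < r \<Longrightarrow> degree (Q $$ (a,b)) < K"
  shows "eval_mat P u * eval_mat Q (u ^ K) = mat_comb r (\<lambda>e. u ^ e) (coeff_pair_mat r K P Q) {..<K^2}"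
proof -
  have "u ^ (e mod K) * (u ^ K) ^ (e div K) = u ^ e" for e
    by (simp add: power_mult[symmetric] power_add[symmetric])
  then show ?thesis using separated_expansion[OF assms, of u "u ^ K"] by simp
qed

lemma separated_product_span:
  fixes P Q :: "'a::field poly mat" and \<omega> :: 'a
  assumes P: "P \<in> carrier_mat r r" and Q: "Q \<in> carrier_mat r r"
    and deg_P: "\<And>a b. a < r \<Longrightarrow> b < r \<Longrightarrow> degree (P $$ (a,b)) < K"
    and deg_Q: "\<And>a b. a < r \<Longrightarrow> b < r \<Longrightarrow> degree (Q $$ (a,b)) < K"
    and "0 < K" "0 < r" and \<omega>: "\<omega> \<noteq> 0" "\<And>k. 0 < k \<Longrightarrow> k < K^2 \<Longrightarrow> \<omega> ^ k \<noteq> 1"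
  obtains H where "H \<noteq> 0" "degree H < (K * r)^2"
    and "\<And>\<alpha>. poly H \<alpha> \<noteq> 0 \<Longrightarrow> mat_span r {eval_mat P x * eval_mat Q y | x y. True}
           \<subseteq> mat_span r {eval_mat P (\<omega>^l * \<alpha>) * eval_mat Q ((\<omega>^l * \<alpha>)^K) | l. l < r^2}"
proof -
  define C where "C = coeff_pair_mat r K P Q"
  have C: "C e \<in> carrier_mat r r" for e by (simp add: C_def coeff_pair_mat_def)
  obtain H where H: "H \<noteq> 0" "degree H < r^2 * K^2"
    and good: "\<And>\<alpha> e. poly H \<alpha> \<noteq> 0 \<Longrightarrow> e < K^2 \<Longrightarrow>
      C e \<in> mat_span r ((\<lambda>l. mat_comb r (\<lambda>e. (\<omega>^l * \<alpha>)^e) C {..<K^2}) ` {..<r^2})"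
    using rotated_evaluations_span[where C = C and T = "K^2" and r = r, OF C] assms by auto
  show ?thesis
  proof (rule that[OF H(1)])
    show "degree H < (K * r)^2" using H(2) by (simp add: power_mult_distrib mult.commute)
    fix \<alpha> assume \<alpha>: "poly H \<alpha> \<noteq> 0"
    let ?Y = "{eval_mat P (\<omega>^l * \<alpha>) * eval_mat Q ((\<omega>^l * \<alpha>)^K) | l. l < r^2}"
    have Y: "?Y \<subseteq> carrier_mat r r" using P Q by (auto simp: eval_mat_def)
    have "eval_mat P (\<omega>^l * \<alpha>) * eval_mat Q ((\<omega>^l * \<alpha>)^K) = mat_comb r (\<lambda>e. (\<omega>^l * \<alpha>)^e) C {..<K^2}"
      for l unfolding C_def by (rule separated_expansion_diagonal[OF P Q deg_P deg_Q])
    then have "(\<lambda>l. mat_comb r (\<lambda>e. (\<omega>^l * \<alpha>)^e) C {..<K^2}) ` {..<r^2} \<subseteq> ?Y" by auto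
    then have C_span: "C e \<in> mat_span r ?Y" if "e \<in> {..<K^2}" for e
      using good[OF \<alpha>] that mat_span_mono by blast
    have "{eval_mat P x * eval_mat Q y | x y. True} \<subseteq> mat_span r ?Y"
    proof (intro subsetI, elim CollectE exE conjE)
      fix A x y assume "A = eval_mat P x * eval_mat Q y"
      then have "A = mat_comb r (\<lambda>e. x ^ (e mod K) * y ^ (e div K)) C {..<K^2}"
        unfolding C_def by (simp add: separated_expansion[OF P Q deg_P deg_Q])
      also have "\<dots> \<in> mat_span r ?Y" by (rule mat_comb_in_span[OF Y]) (simp_all add: C_span)
      finally show "A \<in> mat_span r ?Y" .
    qed
    then show "mat_span r {eval_mat P x * eval_mat Q y | x y. True} \<subseteq> mat_span r ?Y"
      by (rule mat_span_trans[OF Y])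
  qed
qed

lemma few_bad_points:
  fixes P :: "'a::idom poly"
  assumes "P \<noteq> 0" and "\<And>\<alpha>. poly P \<alpha> \<noteq> 0 \<Longrightarrow> good \<alpha>"
  shows "finite {\<alpha>. \<not> good \<alpha>} \<and> card {\<alpha>. \<not> good \<alpha>} \<le> degree P"
proof -
  have sub: "{\<alpha>. \<not> good \<alpha>} \<subseteq> {\<alpha>. poly P \<alpha> = 0}" using assms(2) by blast
  show ?thesis
    using finite_subset[OF sub poly_roots_finite[OF assms(1)]]
      card_mono[OF poly_roots_finite[OF assms(1)] sub] card_poly_roots_bound[OF assms(1)]
    by simp
qed

lemma lagrange_collapse:
  fixes c :: "nat \<Rightarrow> 'a::comm_semiring_1"
  assumes "\<And>l. l < s \<Longrightarrow> poly (p l) (\<beta> j) = (if j = l then 1 else 0)" and "j < s"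
  shows "(\<Sum>l<s. c l * poly (p l) (\<beta> j)) = c j"
proof -
  have "(\<Sum>l<s. c l * poly (p l) (\<beta> j)) = (\<Sum>l<s. if l = j then c l else 0)"
    using assms(1) by (intro sum.cong) auto
  then show ?thesis using assms(2) by simp
qed

theorem lemma3p7:
  fixes D n m r :: nat
    and M N :: "nat \<Rightarrow> 'a::field poly mat"
    and f g :: "nat \<Rightarrow> 'a poly"
    and \<omega> :: 'a
    and \<beta> :: "nat \<Rightarrow> 'a"
    and p :: "nat \<Rightarrow> 'a poly"
  assumes "D \<ge> 1" "n \<ge> 1" "m \<ge> 1" "r \<ge> 1"
    and M_dim: "\<And>i. i < D \<Longrightarrow> M i \<in> carrier_mat r r"
    and N_dim: "\<And>i. i < D \<Longrightarrow> N i \<in> carrier_mat r r"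
    and M_deg: "\<And>i a b. i < D \<Longrightarrow> a < r \<Longrightarrow> b < r \<Longrightarrow> degree (M i $$ (a, b)) < n"
    and N_deg: "\<And>i a b. i < D \<Longrightarrow> a < r \<Longrightarrow> b < r \<Longrightarrow> degree (N i $$ (a, b)) < n"
    and f_deg: "\<And>i. i < D \<Longrightarrow> degree (f i) \<le> m"
    and g_deg: "\<And>i. i < D \<Longrightarrow> degree (g i) \<le> m"
    and \<omega>_nz: "\<omega> \<noteq> 0"
    and \<omega>_ord: "\<And>k. 0 < k \<Longrightarrow> k < (D * n * m)^2 \<Longrightarrow> \<omega> ^ k \<noteq> 1"
    and \<beta>_dist: "inj_on \<beta> {..<r^2}"
    and p_deg: "\<And>l. l < r^2 \<Longrightarrow> degree (p l) < r^2"
    and p_interp: "\<And>l i. l < r^2 \<Longrightarrow> i < r^2 \<Longrightarrow> poly (p l) (\<beta> i) = (if i = l then 1 else 0)"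
  shows "finite {\<alpha>. \<not> (mat_span r {prod_mats r D (\<lambda>i. eval_mat (M i) (poly (f i) x)) *
                                  prod_mats r D (\<lambda>i. eval_mat (N i) (poly (g i) y)) | x y. True}
              \<subseteq> mat_span r {prod_mats r D (\<lambda>i. eval_mat (M i)
                                  (\<Sum>l<r^2. poly (f i) (\<omega>^l * \<alpha>) * poly (p l) z)) *
                               prod_mats r D (\<lambda>i. eval_mat (N i)
                                  (\<Sum>l<r^2. poly (g i) ((\<omega>^l * \<alpha>)^(D*n*m)) * poly (p l) z)) | z. True})}
       \<and> card {\<alpha>. \<not> (mat_span r {prod_mats r D (\<lambda>i. eval_mat (M i) (poly (f i) x)) *
                                  prod_mats r D (\<lambda>i. eval_mat (N i) (poly (g i) y)) | x y. True}
              \<subseteq> mat_span r {prod_mats r D (\<lambda>i. eval_mat (M i)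
                                  (\<Sum>l<r^2. poly (f i) (\<omega>^l * \<alpha>) * poly (p l) z)) *
                               prod_mats r D (\<lambda>i. eval_mat (N i)
                                  (\<Sum>l<r^2. poly (g i) ((\<omega>^l * \<alpha>)^(D*n*m)) * poly (p l) z)) | z. True})}
           < (D * n * m * r)^2"
    (is "finite {\<alpha>. \<not> (mat_span r ?X \<subseteq> mat_span r (?Y \<alpha>))} \<and> _")
proof -
  let ?K = "D * n * m"
  have pos: "0 < D" "0 < n" "0 < m" "0 < r" using assms(1-4) by auto
  obtain PM where PM: "PM \<in> carrier_mat r r" "\<And>a b. a < r \<Longrightarrow> b < r \<Longrightarrow> degree (PM $$ (a,b)) < ?K"
    and ev_M: "\<And>x. prod_mats r D (\<lambda>i. eval_mat (M i) (poly (f i) x)) = eval_mat PM x"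
    using composed_product_polynomial[where A = M and f = f and D = D and r = r and n = n and m = m,
        OF pos(1-3) M_dim M_deg f_deg] by blast
  obtain PN where PN: "PN \<in> carrier_mat r r" "\<And>a b. a < r \<Longrightarrow> b < r \<Longrightarrow> degree (PN $$ (a,b)) < ?K"
    and ev_N: "\<And>y. prod_mats r D (\<lambda>i. eval_mat (N i) (poly (g i) y)) = eval_mat PN y"
    using composed_product_polynomial[where A = N and f = g and D = D and r = r and n = n and m = m,
        OF pos(1-3) N_dim N_deg g_deg] by blast
  obtain H where H: "H \<noteq> 0" "degree H < (?K * r)^2"
    and span: "\<And>\<alpha>. poly H \<alpha> \<noteq> 0 \<Longrightarrow> mat_span r {eval_mat PM x * eval_mat PN y | x y. True}
      \<subseteq> mat_span r {eval_mat PM (\<omega>^l * \<alpha>) * eval_mat PN ((\<omega>^l * \<alpha>)^?K) | l. l < r^2}"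
    using separated_product_span[OF PM(1) PN(1) PM(2) PN(2)] pos \<omega>_nz \<omega>_ord by auto
  have good: "mat_span r ?X \<subseteq> mat_span r (?Y \<alpha>)" if \<alpha>: "poly H \<alpha> \<noteq> 0" for \<alpha>
  proof -
    have "?X = {eval_mat PM x * eval_mat PN y | x y. True}" by (simp only: ev_M ev_N)
    moreover have "{eval_mat PM (\<omega>^l * \<alpha>) * eval_mat PN ((\<omega>^l * \<alpha>)^?K) | l. l < r^2} \<subseteq> ?Y \<alpha>"
    proof (intro subsetI, elim CollectE exE conjE)
      fix A l assume A: "A = eval_mat PM (\<omega>^l * \<alpha>) * eval_mat PN ((\<omega>^l * \<alpha>)^?K)" and l: "l < r^2"
      have collapse: "(\<Sum>l'<r^2. c l' * poly (p l') (\<beta> l)) = c l" for c :: "nat \<Rightarrow> 'a"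
        by (rule lagrange_collapse) (use p_interp l in auto)
      show "A \<in> ?Y \<alpha>"
        using A by (intro CollectI exI[of _ "\<beta> l"]) (simp add: collapse ev_M ev_N)
    qed
    ultimately show ?thesis using span[OF \<alpha>] mat_span_mono by blast
  qed
  let ?B = "{\<alpha>. \<not> (mat_span r ?X \<subseteq> mat_span r (?Y \<alpha>))}"
  have "finite ?B \<and> card ?B \<le> degree H" by (rule few_bad_points[OF H(1) good])
  then show ?thesis using H(2) by linarith
qed

end
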